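(* Let $n\ge2$, let $f:2^{[n]}\to\mathbb{R}_+$ be monotone submodular, and let $\mathbf{x}=(x,\dots,x)\in[0,1]^n$ with $x\le 1/(n-1)$ or $x\ge(n-2)/(n-1)$. Then $f^{+}(\mathbf{x})/f^{++}(\mathbf{x})\le4/3$ (with the convention $0/0=1$).
   Context: $[n]=\{1,\dots,n\}$. A set function $f:2^{[n]}\to\mathbb{R}_+$ is monotone if $f(S)\le f(T)$ for $S\subseteq T$, submodular if $f(S)+f(T)\ge f(S\cap T)+f(S\cup T)$. For $\mathbf{x}\in[0,1]^n$: the concave closure $f^{+}(\mathbf{x})=\max\sum_{S\subseteq[n]}\theta(S)f(S)$ over $\theta:2^{[n]}\to\mathbb{R}_{\ge0}$ with $\sum_S\theta(S)=1$ and $\sum_{S\ni i}\theta(S)=x_i$ for all $i$; the upper pairwise independent extension $f^{++}(\mathbf{x})$ is the same maximum with the additional constraints $\sum_{S\ni i,j}\theta(S)=x_ix_j$ for all $i<j$. *)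

theory Defs
  imports Main "HOL-Library.FuncSet" Complex_Main
begin

text \<open>Ground set [n] = {1..n}; set functions are f :: nat set => real, only their
values on subsets of {1..n} matter. Points x in [0,1]^n are functions nat => real,
only the values on {1..n} matter.\<close>

definition monotone_setfun :: "nat \<Rightarrow> (nat set \<Rightarrow> real) \<Rightarrow> bool" where
  "monotone_setfun n f \<longleftrightarrow> (\<forall>S T. S \<subseteq> T \<and> T \<subseteq> {1..n} \<longrightarrow> f S \<le> f T)"

definition submodular_setfun :: "nat \<Rightarrow> (nat set \<Rightarrow> real) \<Rightarrow> bool" where
  "submodular_setfun n f \<longleftrightarrow>
     (\<forall>S T. S \<subseteq> {1..n} \<and> T \<subseteq> {1..n} \<longrightarrow> f S + f T \<ge> f (S \<inter> T) + f (S \<union> T))"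

definition nonneg_setfun :: "nat \<Rightarrow> (nat set \<Rightarrow> real) \<Rightarrow> bool" where
  "nonneg_setfun n f \<longleftrightarrow> (\<forall>S. S \<subseteq> {1..n} \<longrightarrow> f S \<ge> 0)"

definition marginal_dist :: "nat \<Rightarrow> (nat \<Rightarrow> real) \<Rightarrow> (nat set \<Rightarrow> real) \<Rightarrow> bool" where
  "marginal_dist n x \<theta> \<longleftrightarrow>
     (\<forall>S\<in>Pow {1..n}. \<theta> S \<ge> 0) \<and>
     (\<Sum>S\<in>Pow {1..n}. \<theta> S) = 1 \<and>
     (\<forall>i\<in>{1..n}. (\<Sum>S\<in>{S\<in>Pow {1..n}. i \<in> S}. \<theta> S) = x i)"

definition pairwise_indep_dist :: "nat \<Rightarrow> (nat \<Rightarrow> real) \<Rightarrow> (nat set \<Rightarrow> real) \<Rightarrow> bool" where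
  "pairwise_indep_dist n x \<theta> \<longleftrightarrow>
     marginal_dist n x \<theta> \<and>
     (\<forall>i\<in>{1..n}. \<forall>j\<in>{1..n}. i < j \<longrightarrow>
        (\<Sum>S\<in>{S\<in>Pow {1..n}. i \<in> S \<and> j \<in> S}. \<theta> S) = x i * x j)"

text \<open>Concave closure f^+ (the maximum is attained; we take the supremum).\<close>
definition concave_closure :: "nat \<Rightarrow> (nat set \<Rightarrow> real) \<Rightarrow> (nat \<Rightarrow> real) \<Rightarrow> real" where
  "concave_closure n f x =
     Sup {(\<Sum>S\<in>Pow {1..n}. \<theta> S * f S) | \<theta>. marginal_dist n x \<theta>}"

definition upper_pi_ext :: "nat \<Rightarrow> (nat set \<Rightarrow> real) \<Rightarrow> (nat \<Rightarrow> real) \<Rightarrow> real" where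
  "upper_pi_ext n f x =
     Sup {(\<Sum>S\<in>Pow {1..n}. \<theta> S * f S) | \<theta>. pairwise_indep_dist n x \<theta>}"

end

theory Submission
  imports Defs
begin

text \<open>It suffices to exhibit one pairwise independent distribution \<open>\<theta>\<^sub>0\<close> with marginals \<open>x\<close>
whose value is at least \<open>3/4\<close> of the value of every distribution with marginals \<open>x\<close>.
For \<open>(n - 1) x \<le> 1\<close>, put mass \<open>(1 - x)(1 - (n - 1) x)\<close> on \<open>\<emptyset>\<close>, \<open>x (1 - x)\<close> on each
singleton and \<open>x\<^sup>2\<close> on \<open>[n]\<close>; any distribution with marginals \<open>x\<close> has value at most
\<open>f[n]\<close> and, by submodularity, at most \<open>f \<emptyset> + x \<Sum>\<^sub>i (f {i} - f \<emptyset>)\<close>, and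
\<open>1 - x + x\<^sup>2 \<ge> 3/4\<close> compares both bounds with the value of \<open>\<theta>\<^sub>0\<close>.
For \<open>(n - 1)(1 - x) \<le> 1\<close>, take the image of the former distribution for \<open>1 - x\<close> under
complementation, and use instead the submodular bound \<open>f[n] - (1 - x) \<Sum>\<^sub>i (f[n] - f([n] - {i}))\<close>.\<close>

definition expectation :: "nat \<Rightarrow> (nat set \<Rightarrow> real) \<Rightarrow> (nat set \<Rightarrow> real) \<Rightarrow> real" where
  "expectation n \<theta> g = (\<Sum>S\<in>Pow {1..n}. \<theta> S * g S)"

lemma expectation_cong:
  "(\<And>S. S \<subseteq> {1..n} \<Longrightarrow> g S = h S) \<Longrightarrow> expectation n \<theta> g = expectation n \<theta> h"
  unfolding expectation_def by (intro sum.cong) auto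

lemma expectation_add:
  "expectation n \<theta> (\<lambda>S. g S + h S) = expectation n \<theta> g + expectation n \<theta> h"
  unfolding expectation_def by (simp add: distrib_left sum.distrib)

lemma expectation_diff:
  "expectation n \<theta> (\<lambda>S. g S - h S) = expectation n \<theta> g - expectation n \<theta> h"
  unfolding expectation_def by (simp add: right_diff_distrib sum_subtractf)

lemma expectation_cmult:
  "expectation n \<theta> (\<lambda>S. c * g S) = c * expectation n \<theta> g"
  unfolding expectation_def by (simp add: sum_distrib_left mult.left_commute)

lemma expectation_sum:
  "expectation n \<theta> (\<lambda>S. \<Sum>i\<in>I. g i S) = (\<Sum>i\<in>I. expectation n \<theta> (g i))"
  unfolding expectation_def by (simp add: sum_distrib_left sum.swap[of _ I])

lemma expectation_compl:
  "expectation n (\<lambda>S. \<theta> ({1..n} - S)) g = expectation n \<theta> (\<lambda>S. g ({1..n} - S))"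
  unfolding expectation_def
  by (rule sum.reindex_bij_witness[where i="\<lambda>S. {1..n} - S" and j="\<lambda>S. {1..n} - S"])
     (auto simp: Diff_Diff_Int Int_absorb1)

lemma sum_filter_Pow_eq_expectation:
  "(\<Sum>S\<in>{S\<in>Pow {1..n}. P S}. \<theta> S) = expectation n \<theta> (\<lambda>S. of_bool (P S))"
proof -
  have "expectation n \<theta> (\<lambda>S. of_bool (P S)) = (\<Sum>S\<in>Pow {1..n}. if P S then \<theta> S else 0)"
    unfolding expectation_def by (intro sum.cong) auto
  then show ?thesis using sum.inter_filter[of "Pow {1..n}" \<theta> P] by simp
qed

lemma marginal_dist_iff_expectation:
  "marginal_dist n x \<theta> \<longleftrightarrow>
     (\<forall>S\<in>Pow {1..n}. 0 \<le> \<theta> S) \<and> expectation n \<theta> (\<lambda>_. 1) = 1 \<and>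
     (\<forall>i\<in>{1..n}. expectation n \<theta> (\<lambda>S. of_bool (i \<in> S)) = x i)"
  unfolding marginal_dist_def sum_filter_Pow_eq_expectation by (simp add: expectation_def)

lemma pairwise_indep_dist_iff_expectation:
  "pairwise_indep_dist n x \<theta> \<longleftrightarrow> marginal_dist n x \<theta> \<and>
     (\<forall>i\<in>{1..n}. \<forall>j\<in>{1..n}. i < j \<longrightarrow>
        expectation n \<theta> (\<lambda>S. of_bool (i \<in> S \<and> j \<in> S)) = x i * x j)"
  unfolding pairwise_indep_dist_def sum_filter_Pow_eq_expectation ..

lemma expectation_const:
  assumes "marginal_dist n x \<theta>"
  shows "expectation n \<theta> (\<lambda>_. c) = c"
proof -
  have "expectation n \<theta> (\<lambda>_. c) = c * expectation n \<theta> (\<lambda>_. 1)"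
    using expectation_cmult[of n \<theta> c "\<lambda>_. 1"] by simp
  then show ?thesis using assms by (simp add: marginal_dist_iff_expectation)
qed

lemma expectation_mono:
  assumes "marginal_dist n x \<theta>" "\<And>S. S \<subseteq> {1..n} \<Longrightarrow> g S \<le> h S"
  shows "expectation n \<theta> g \<le> expectation n \<theta> h"
  using assms unfolding marginal_dist_def expectation_def by (intro sum_mono mult_left_mono) auto

lemma expectation_nonneg:
  "marginal_dist n x \<theta> \<Longrightarrow> nonneg_setfun n f \<Longrightarrow> 0 \<le> expectation n \<theta> f"
  using expectation_mono[of n x \<theta> "\<lambda>_. 0" f] expectation_const[of n x \<theta> 0]
  by (simp add: nonneg_setfun_def)

lemma expectation_le_top:
  "marginal_dist n x \<theta> \<Longrightarrow> monotone_setfun n f \<Longrightarrow> expectation n \<theta> f \<le> f {1..n}"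
  using expectation_mono[of n x \<theta> f "\<lambda>_. f {1..n}"] expectation_const[of n x \<theta> "f {1..n}"]
  by (simp add: monotone_setfun_def)

lemma expectation_modular:
  assumes "marginal_dist n x \<theta>"
  shows "expectation n \<theta> (\<lambda>S. K + (\<Sum>i\<in>S. c i)) = K + (\<Sum>i\<in>{1..n}. x i * c i)"
proof -
  have "expectation n \<theta> (\<lambda>S. K + (\<Sum>i\<in>S. c i))
      = expectation n \<theta> (\<lambda>S. K + (\<Sum>i\<in>{1..n}. c i * of_bool (i \<in> S)))"
  proof (rule expectation_cong)
    fix S :: "nat set" assume "S \<subseteq> {1..n}"
    then have "{i \<in> {1..n}. i \<in> S} = S" by auto
    then show "K + (\<Sum>i\<in>S. c i) = K + (\<Sum>i\<in>{1..n}. c i * of_bool (i \<in> S))"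
      using sum.inter_filter[of "{1..n}" c "\<lambda>i. i \<in> S"] by (simp add: of_bool_def if_distrib cong: if_cong)
  qed
  also have "\<dots> = K + (\<Sum>i\<in>{1..n}. c i * expectation n \<theta> (\<lambda>S. of_bool (i \<in> S)))"
    by (simp only: expectation_add expectation_sum expectation_cmult expectation_const[OF assms])
  also have "\<dots> = K + (\<Sum>i\<in>{1..n}. x i * c i)"
    using assms by (simp add: marginal_dist_iff_expectation mult.commute)
  finally show ?thesis .
qed

lemma pairwise_indep_dist_compl:
  assumes "pairwise_indep_dist n x \<theta>"
  shows "pairwise_indep_dist n (\<lambda>i. 1 - x i) (\<lambda>S. \<theta> ({1..n} - S))"
proof -
  let ?N = "{1..n}" and ?\<theta>' = "\<lambda>S. \<theta> ({1..n} - S)"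
  have mg: "marginal_dist n x \<theta>" and
    pair: "\<And>i j. i \<in> ?N \<Longrightarrow> j \<in> ?N \<Longrightarrow> i < j \<Longrightarrow>
      expectation n \<theta> (\<lambda>S. of_bool (i \<in> S \<and> j \<in> S)) = x i * x j"
    using assms by (auto simp: pairwise_indep_dist_iff_expectation)
  have ind: "expectation n \<theta> (\<lambda>S. of_bool (i \<in> S)) = x i" if "i \<in> ?N" for i
    using mg that by (simp add: marginal_dist_iff_expectation)
  have "0 \<le> ?\<theta>' S" if "S \<in> Pow ?N" for S
    using mg by (auto simp: marginal_dist_def)
  moreover have "expectation n ?\<theta>' (\<lambda>_. 1) = 1"
    using expectation_compl[of n \<theta> "\<lambda>_. 1"] expectation_const[OF mg, of 1] by simp
  moreover have "expectation n ?\<theta>' (\<lambda>S. of_bool (i \<in> S)) = 1 - x i" if i: "i \<in> ?N" for i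
  proof -
    have "expectation n ?\<theta>' (\<lambda>S. of_bool (i \<in> S)) = expectation n \<theta> (\<lambda>S. 1 - of_bool (i \<in> S))"
      unfolding expectation_compl using i by (intro expectation_cong) auto
    then show ?thesis by (simp add: expectation_diff expectation_const[OF mg] ind[OF i])
  qed
  moreover have "expectation n ?\<theta>' (\<lambda>S. of_bool (i \<in> S \<and> j \<in> S)) = (1 - x i) * (1 - x j)"
    if ij: "i \<in> ?N" "j \<in> ?N" "i < j" for i j
  proof -
    have "expectation n ?\<theta>' (\<lambda>S. of_bool (i \<in> S \<and> j \<in> S))
        = expectation n \<theta> (\<lambda>S. 1 - of_bool (i \<in> S) - of_bool (j \<in> S) + of_bool (i \<in> S \<and> j \<in> S))"
      unfolding expectation_compl using ij by (intro expectation_cong) auto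
    also have "\<dots> = 1 - x i - x j + x i * x j"
      by (simp add: expectation_add expectation_diff expectation_const[OF mg] ind[OF ij(1)] ind[OF ij(2)] pair[OF ij])
    finally show ?thesis by (simp add: algebra_simps)
  qed
  ultimately show ?thesis
    by (simp add: pairwise_indep_dist_iff_expectation marginal_dist_iff_expectation)
qed

definition empty_singletons_full_dist :: "nat \<Rightarrow> real \<Rightarrow> real \<Rightarrow> real \<Rightarrow> nat set \<Rightarrow> real" where
  "empty_singletons_full_dist n a b c S =
     (if S = {} then a else if card S = 1 then b else if S = {1..n} then c else 0)"

lemma sum_Pow_card_1:
  assumes "finite N"
  shows "(\<Sum>S\<in>Pow N. if card S = 1 then h S else 0) = (\<Sum>i\<in>N. h {i})"
proof -
  have "(\<Sum>S\<in>Pow N. if card S = 1 then h S else 0) = (\<Sum>S\<in>{S\<in>Pow N. card S = 1}. h S)"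
    using sum.inter_filter[of "Pow N" h "\<lambda>S. card S = 1"] assms by simp
  also have "{S\<in>Pow N. card S = 1} = (\<lambda>i. {i}) ` N"
    by (auto simp: card_1_singleton_iff)
  also have "(\<Sum>S\<in>(\<lambda>i. {i}) ` N. h S) = (\<Sum>i\<in>N. h {i})"
    by (subst sum.reindex) (auto simp: inj_on_def)
  finally show ?thesis .
qed

lemma expectation_empty_singletons_full_dist:
  assumes "2 \<le> n"
  shows "expectation n (empty_singletons_full_dist n a b c) g
       = a * g {} + b * (\<Sum>i\<in>{1..n}. g {i}) + c * g {1..n}"
proof -
  let ?N = "{1..n}"
  have "card ?N \<noteq> 1" "?N \<noteq> {}" using assms by auto
  then have "empty_singletons_full_dist n a b c S * g S =
      (if S = {} then a * g S else 0) + (if card S = 1 then b * g S else 0)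
      + (if S = ?N then c * g S else 0)" for S
    by (auto simp: empty_singletons_full_dist_def)
  then have "expectation n (empty_singletons_full_dist n a b c) g
      = (\<Sum>S\<in>Pow ?N. if S = {} then a * g S else 0) + (\<Sum>S\<in>Pow ?N. if card S = 1 then b * g S else 0)
        + (\<Sum>S\<in>Pow ?N. if S = ?N then c * g S else 0)"
    unfolding expectation_def by (simp only: sum.distrib)
  also have "\<dots> = a * g {} + b * (\<Sum>i\<in>?N. g {i}) + c * g ?N"
    using sum_Pow_card_1[of ?N "\<lambda>S. b * g S"] by (simp add: sum_distrib_left)
  finally show ?thesis .
qed

lemma pairwise_indep_empty_singletons_full_dist:
  assumes n: "2 \<le> n" and y: "0 \<le> y" "y \<le> 1" "(real n - 1) * y \<le> 1"
  shows "pairwise_indep_dist n (\<lambda>_. y)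
           (empty_singletons_full_dist n ((1 - y) * (1 - (real n - 1) * y)) (y * (1 - y)) (y\<^sup>2))"
    (is "pairwise_indep_dist n _ (empty_singletons_full_dist n ?a ?b ?c)")
proof -
  let ?N = "{1..n}" and ?\<theta> = "empty_singletons_full_dist n ?a ?b ?c"
  have E: "expectation n ?\<theta> g = ?a * g {} + ?b * (\<Sum>i\<in>?N. g {i}) + ?c * g ?N" for g
    by (rule expectation_empty_singletons_full_dist[OF n])
  have "0 \<le> ?\<theta> S" for S
    using y by (simp add: empty_singletons_full_dist_def)
  moreover have "expectation n ?\<theta> (\<lambda>_. 1) = 1"
    unfolding E by (simp add: algebra_simps power2_eq_square)
  moreover have "expectation n ?\<theta> (\<lambda>S. of_bool (i \<in> S)) = y" if "i \<in> ?N" for i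
  proof -
    have "(\<Sum>k\<in>?N. of_bool (i \<in> {k}) :: real) = 1"
      using that by (simp add: sum.delta)
    then show ?thesis using that unfolding E by (simp add: algebra_simps power2_eq_square)
  qed
  moreover have "expectation n ?\<theta> (\<lambda>S. of_bool (i \<in> S \<and> j \<in> S)) = y * y"
    if "i \<in> ?N" "j \<in> ?N" "i < j" for i j
  proof -
    have "(\<Sum>k\<in>?N. of_bool (i \<in> {k} \<and> j \<in> {k}) :: real) = 0"
      using that by (intro sum.neutral) auto
    then show ?thesis using that unfolding E by (simp add: power2_eq_square)
  qed
  ultimately show ?thesis
    by (simp add: pairwise_indep_dist_iff_expectation marginal_dist_iff_expectation)
qed

lemma submodular_setfunD:
  "submodular_setfun n f \<Longrightarrow> S \<subseteq> {1..n} \<Longrightarrow> T \<subseteq> {1..n} \<Longrightarrow>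
    f (S \<inter> T) + f (S \<union> T) \<le> f S + f T"
  unfolding submodular_setfun_def by blast

lemma submodular_le_singleton_gains:
  assumes sub: "submodular_setfun n f" and "S \<subseteq> {1..n}"
  shows "f S \<le> f {} + (\<Sum>i\<in>S. f {i} - f {})"
proof -
  have "finite S" using assms(2) finite_subset by blast
  then show ?thesis using assms(2)
  proof (induction S rule: finite_induct)
    case (insert i S)
    have "f (S \<inter> {i}) + f (S \<union> {i}) \<le> f S + f {i}"
      using insert.prems by (intro submodular_setfunD[OF sub]) auto
    moreover have "S \<inter> {i} = {}" using insert.hyps by auto
    ultimately show ?case using insert by (simp add: sum.insert)
  qed simp
qed

lemma submodular_compl_le:
  assumes sub: "submodular_setfun n f" and "T \<subseteq> {1..n}"
  shows "f ({1..n} - T) \<le> f {1..n} - (\<Sum>i\<in>T. f {1..n} - f ({1..n} - {i}))"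
proof -
  have "finite T" using assms(2) finite_subset by blast
  then show ?thesis using assms(2)
  proof (induction T rule: finite_induct)
    case (insert i T)
    let ?N = "{1..n}"
    have "f ((?N - T) \<inter> (?N - {i})) + f ((?N - T) \<union> (?N - {i})) \<le> f (?N - T) + f (?N - {i})"
      by (intro submodular_setfunD[OF sub]) auto
    moreover have "(?N - T) \<inter> (?N - {i}) = ?N - insert i T" by auto
    moreover have "(?N - T) \<union> (?N - {i}) = ?N" using insert by auto
    ultimately show ?case using insert by (simp add: sum.insert)
  qed simp
qed

lemma four_thirds_bound_low:
  fixes a M B x v :: real
  assumes "0 \<le> a" "a \<le> M" "0 \<le> B" "0 \<le> x" "x \<le> 1" "v \<le> M" "v \<le> a + x * B"
  shows "3 * v \<le> 4 * (a + x * (1 - x) * B + x\<^sup>2 * (M - a))"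
proof -
  have q: "3/4 \<le> 1 - x + x\<^sup>2"
    using zero_le_power2[of "x - 1/2"] by (simp add: power2_eq_square algebra_simps)
  have "3/4 * min (x * B) (M - a) \<le> x * (1 - x) * B + x\<^sup>2 * (M - a)"
  proof (cases "x * B \<le> M - a")
    case True
    have "x\<^sup>2 * (x * B) \<le> x\<^sup>2 * (M - a)" using True by (intro mult_left_mono) auto
    moreover have "3/4 * (x * B) \<le> (1 - x + x\<^sup>2) * (x * B)"
      using assms q by (intro mult_right_mono) auto
    ultimately show ?thesis using True by (simp add: algebra_simps power2_eq_square)
  next
    case False
    have "(1 - x) * (M - a) \<le> (1 - x) * (x * B)" using False assms by (intro mult_left_mono) auto
    moreover have "3/4 * (M - a) \<le> (1 - x + x\<^sup>2) * (M - a)"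
      using assms q by (intro mult_right_mono) auto
    ultimately show ?thesis using False by (simp add: algebra_simps power2_eq_square)
  qed
  moreover have "v \<le> a + min (x * B) (M - a)" using assms by simp
  ultimately show ?thesis using assms(1) by argo
qed

lemma four_thirds_bound_high:
  fixes a M E y v :: real
  assumes "0 \<le> a" "0 \<le> E" "E \<le> M - a" "0 \<le> y" "y \<le> 1/2" "v \<le> M - y * E"
  shows "3 * v \<le> 4 * (M * (1 - y\<^sup>2) - y * (1 - y) * E + y\<^sup>2 * a)"
proof -
  have "0 \<le> (M - a - E) * (1 - 4 * y\<^sup>2)"
    using assms mult_mono[of y "1/2" y "1/2"] by (intro mult_nonneg_nonneg) (auto simp: power2_eq_square)
  moreover have "0 \<le> E * (1 - y)" using assms by simp
  moreover have "4 * (M * (1 - y\<^sup>2) - y * (1 - y) * E + y\<^sup>2 * a) - 3 * (M - y * E)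
      = (M - a - E) * (1 - 4 * y\<^sup>2) + E * (1 - y) + a"
    by (simp add: algebra_simps power2_eq_square)
  ultimately show ?thesis using assms(1,6) by argo
qed

lemma dominating_pairwise_indep_dist_low:
  assumes n: "2 \<le> n" and f: "nonneg_setfun n f" "monotone_setfun n f" "submodular_setfun n f"
    and x: "0 \<le> x" "x \<le> 1" "(real n - 1) * x \<le> 1"
  obtains \<theta>\<^sub>0 where "pairwise_indep_dist n (\<lambda>_. x) \<theta>\<^sub>0"
    "\<And>\<theta>. marginal_dist n (\<lambda>_. x) \<theta> \<Longrightarrow> 3 * expectation n \<theta> f \<le> 4 * expectation n \<theta>\<^sub>0 f"
proof
  let ?N = "{1..n}" and ?a = "f {}" and ?M = "f {1..n}"
  let ?B = "\<Sum>i\<in>?N. f {i} - f {}"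
  define \<theta>\<^sub>0 where "\<theta>\<^sub>0 = empty_singletons_full_dist n ((1 - x) * (1 - (real n - 1) * x)) (x * (1 - x)) (x\<^sup>2)"
  show "pairwise_indep_dist n (\<lambda>_. x) \<theta>\<^sub>0"
    unfolding \<theta>\<^sub>0_def using n x by (rule pairwise_indep_empty_singletons_full_dist)
  have witness_value: "expectation n \<theta>\<^sub>0 f = ?a + x * (1 - x) * ?B + x\<^sup>2 * (?M - ?a)"
    using n by (simp add: \<theta>\<^sub>0_def expectation_empty_singletons_full_dist sum_subtractf
        algebra_simps power2_eq_square)
  fix \<theta> assume \<theta>: "marginal_dist n (\<lambda>_. x) \<theta>"
  have "expectation n \<theta> f \<le> expectation n \<theta> (\<lambda>S. ?a + (\<Sum>i\<in>S. f {i} - f {}))"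
    using \<theta> submodular_le_singleton_gains[OF f(3)] by (rule expectation_mono)
  also have "\<dots> = ?a + x * ?B"
    by (simp add: expectation_modular[OF \<theta>] sum_distrib_left)
  finally have "expectation n \<theta> f \<le> ?a + x * ?B" .
  moreover have "0 \<le> ?a" "?a \<le> ?M" "0 \<le> ?B"
    using f(1,2) by (auto simp: nonneg_setfun_def monotone_setfun_def intro!: sum_nonneg)
  ultimately show "3 * expectation n \<theta> f \<le> 4 * expectation n \<theta>\<^sub>0 f"
    unfolding witness_value using x expectation_le_top[OF \<theta> f(2)] by (intro four_thirds_bound_low) auto
qed

lemma dominating_pairwise_indep_dist_high:
  assumes n: "2 \<le> n" and f: "nonneg_setfun n f" "monotone_setfun n f" "submodular_setfun n f"
    and x: "1/2 \<le> x" "x \<le> 1" "(real n - 1) * (1 - x) \<le> 1"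
  obtains \<theta>\<^sub>0 where "pairwise_indep_dist n (\<lambda>_. x) \<theta>\<^sub>0"
    "\<And>\<theta>. marginal_dist n (\<lambda>_. x) \<theta> \<Longrightarrow> 3 * expectation n \<theta> f \<le> 4 * expectation n \<theta>\<^sub>0 f"
proof
  let ?N = "{1..n}" and ?a = "f {}" and ?M = "f {1..n}"
  let ?E = "\<Sum>i\<in>?N. f ?N - f (?N - {i})"
  define y where "y = 1 - x"
  define \<theta> where "\<theta> = empty_singletons_full_dist n ((1 - y) * (1 - (real n - 1) * y)) (y * (1 - y)) (y\<^sup>2)"
  define \<theta>\<^sub>0 where "\<theta>\<^sub>0 S = \<theta> (?N - S)" for S
  have "pairwise_indep_dist n (\<lambda>_. y) \<theta>"
    unfolding \<theta>_def using n x by (intro pairwise_indep_empty_singletons_full_dist) (auto simp: y_def)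
  from pairwise_indep_dist_compl[OF this]
  show "pairwise_indep_dist n (\<lambda>_. x) \<theta>\<^sub>0" by (simp add: \<theta>\<^sub>0_def[abs_def] y_def)
  have "expectation n \<theta>\<^sub>0 f = expectation n \<theta> (\<lambda>S. f (?N - S))"
    unfolding \<theta>\<^sub>0_def by (rule expectation_compl)
  also have "\<dots> = ?M * (1 - y\<^sup>2) - y * (1 - y) * ?E + y\<^sup>2 * ?a"
    using n by (simp add: \<theta>_def expectation_empty_singletons_full_dist sum_subtractf
        algebra_simps power2_eq_square)
  finally have witness_value: "expectation n \<theta>\<^sub>0 f = ?M * (1 - y\<^sup>2) - y * (1 - y) * ?E + y\<^sup>2 * ?a" .
  fix \<theta>' assume \<theta>': "marginal_dist n (\<lambda>_. x) \<theta>'"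
  have "f S \<le> (?M - ?E) + (\<Sum>i\<in>S. f ?N - f (?N - {i}))" if "S \<subseteq> ?N" for S
  proof -
    have "(\<Sum>i\<in>?N - S. f ?N - f (?N - {i})) = ?E - (\<Sum>i\<in>S. f ?N - f (?N - {i}))"
      using that by (simp add: sum_diff)
    moreover have "?N - (?N - S) = S" using that by auto
    ultimately show ?thesis
      using submodular_compl_le[OF f(3), of "?N - S"] by simp
  qed
  then have "expectation n \<theta>' f \<le> expectation n \<theta>' (\<lambda>S. (?M - ?E) + (\<Sum>i\<in>S. f ?N - f (?N - {i})))"
    using \<theta>' by (intro expectation_mono)
  also have "\<dots> = ?M - y * ?E"
    unfolding expectation_modular[OF \<theta>'] sum_distrib_left[symmetric] by (simp add: y_def algebra_simps)
  finally have "expectation n \<theta>' f \<le> ?M - y * ?E" .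
  moreover have "?a \<le> ?M - ?E"
    using submodular_compl_le[OF f(3), of ?N] by simp
  moreover have "0 \<le> ?a" "0 \<le> ?E"
    using f(1,2) by (auto simp: nonneg_setfun_def monotone_setfun_def intro!: sum_nonneg)
  ultimately show "3 * expectation n \<theta>' f \<le> 4 * expectation n \<theta>\<^sub>0 f"
    unfolding witness_value using x by (intro four_thirds_bound_high) (auto simp: y_def)
qed

lemma ratio_le_four_thirds_if_dominated:
  assumes f: "nonneg_setfun n f" "monotone_setfun n f"
    and \<theta>\<^sub>0: "pairwise_indep_dist n x \<theta>\<^sub>0"
    and dominated: "\<And>\<theta>. marginal_dist n x \<theta> \<Longrightarrow> 3 * expectation n \<theta> f \<le> 4 * expectation n \<theta>\<^sub>0 f"
  shows "(if upper_pi_ext n f x = 0 then concave_closure n f x = 0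
          else concave_closure n f x / upper_pi_ext n f x \<le> 4 / 3)"
proof -
  let ?C = "{expectation n \<theta> f | \<theta>. marginal_dist n x \<theta>}"
  let ?P = "{expectation n \<theta> f | \<theta>. pairwise_indep_dist n x \<theta>}"
  have C: "concave_closure n f x = Sup ?C" and P: "upper_pi_ext n f x = Sup ?P"
    by (simp_all add: concave_closure_def upper_pi_ext_def expectation_def)
  have mg\<^sub>0: "marginal_dist n x \<theta>\<^sub>0" using \<theta>\<^sub>0 by (simp add: pairwise_indep_dist_def)
  have "bdd_above ?C" "bdd_above ?P"
    using expectation_le_top[OF _ f(2)] by (auto simp: pairwise_indep_dist_def intro!: bdd_aboveI)
  then have "expectation n \<theta>\<^sub>0 f \<le> Sup ?C" "expectation n \<theta>\<^sub>0 f \<le> Sup ?P"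
    using mg\<^sub>0 \<theta>\<^sub>0 by (auto intro!: cSup_upper)
  moreover have "Sup ?C \<le> 4 / 3 * expectation n \<theta>\<^sub>0 f"
    using mg\<^sub>0 dominated by (fastforce intro!: cSup_least)
  moreover have "0 \<le> expectation n \<theta>\<^sub>0 f" using expectation_nonneg[OF mg\<^sub>0 f(1)] .
  ultimately show ?thesis unfolding C P by (auto simp: field_simps)
qed

theorem mainTheorem13:
  fixes n :: nat and f :: "nat set \<Rightarrow> real" and x :: real
  assumes "n \<ge> 2"
    and "nonneg_setfun n f" and "monotone_setfun n f" and "submodular_setfun n f"
    and "0 \<le> x" and "x \<le> 1"
    and "x \<le> 1 / (real n - 1) \<or> x \<ge> (real n - 2) / (real n - 1)"
  shows "(if upper_pi_ext n f (\<lambda>_. x) = 0 then concave_closure n f (\<lambda>_. x) = 0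
          else concave_closure n f (\<lambda>_. x) / upper_pi_ext n f (\<lambda>_. x) \<le> 4 / 3)"
proof -
  have n1: "0 < real n - 1" using assms(1) by simp
  obtain \<theta>\<^sub>0 where "pairwise_indep_dist n (\<lambda>_. x) \<theta>\<^sub>0"
    "\<And>\<theta>. marginal_dist n (\<lambda>_. x) \<theta> \<Longrightarrow> 3 * expectation n \<theta> f \<le> 4 * expectation n \<theta>\<^sub>0 f"
  proof (cases "x \<le> 1 / (real n - 1)")
    case True
    then have "(real n - 1) * x \<le> 1" using n1 by (simp add: field_simps)
    then show ?thesis using that assms by (auto elim: dominating_pairwise_indep_dist_low)
  next
    case False
    then have "1 < (real n - 1) * x" "real n - 2 \<le> (real n - 1) * x"
      using assms(7) n1 by (auto simp: field_simps)
    then have "0 < (real n - 1) * (2 * x - 1)" and "(real n - 1) * (1 - x) \<le> 1"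
      by (simp_all add: algebra_simps)
    then have "1/2 \<le> x" "(real n - 1) * (1 - x) \<le> 1"
      using n1 zero_less_mult_pos by fastforce+
    then show ?thesis using that assms by (auto elim: dominating_pairwise_indep_dist_high)
  qed
  then show ?thesis using assms(2,3) by (rule ratio_le_four_thirds_if_dominated[rotated 2])
qed

end
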